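(* Let $\Gamma=(\gamma_{ij})\in(\mathcal{K}_\infty\cup\{0\})^{N\times N}$ be irreducible, $\mu=(\mu_1,\dots,\mu_N)$ with $\mu_i$ monotone aggregation functions, and $\Gamma_\mu$ the induced operator. Let $\kappa_0>0$, $\kappa_\Gamma>\kappa_h>0$, $\delta>0$, let $\phi$ be as in the context, and let $c\in\mathbb{R}^N$ with $c\gg0$ and $\|c\|<\kappa_\Gamma/2$. Let $\tau=\langle y^1,\dots,y^{N+1}\rangle$, $y^j=(v^j,t_j)$, $y^1<\dots<y^{N+1}$, be an $N$-simplex of $\tilde K_1(\delta)$ lying on the boundary of the positive orthant, i.e. $v^j\in\mathbb{R}^N_+$ for all $j$ and there is an index $i^*$ with $v^j_{i^*}=0$ for all $j=1,\dots,N+1$. If $\|v^{N+1}\|<\kappa_0+\kappa_\Gamma$, then $\tau$ is not complete.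
   Context: Order on $\mathbb{R}^N$: $v\ge w$ iff $v_i\ge w_i$ for all $i$; $v>w$ iff $v\ge w$, $v\ne w$; $v\gg w$ iff $v_i>w_i$ for all $i$. $\|\cdot\|$ Euclidean norm, $e=(1,\dots,1)^\top$. $\mathcal{K}_\infty$: continuous, strictly increasing, unbounded $\gamma:\mathbb{R}_+\to\mathbb{R}_+$ with $\gamma(0)=0$; $0$ denotes the zero function. A monotone aggregation function is a continuous $\mu_i:\mathbb{R}^N_+\to\mathbb{R}_+$ with $\mu_i(s)=0$ iff $s=0$, $\mu_i(s)<\mu_i(t)$ whenever $s\ll t$, and $\mu_i(s)\to\infty$ as $\|s\|\to\infty$. The induced operator is $\Gamma_\mu(s)_i=\mu_i(\gamma_{i1}(s_1),\dots,\gamma_{iN}(s_N))$; it is monotone with $\Gamma_\mu(0)=0$. $\Gamma$ is irreducible if the $0$-$1$ matrix $A$ with $a_{ij}=1$ iff $\gamma_{ij}\not\equiv0$ is irreducible (equivalently the directed graph with an edge $j\to i$ iff $\gamma_{ij}\not\equiv 0$ is strongly connected). Given $\kappa_0>0$, $\kappa_\Gamma>\kappa_h>0$, $\phi(v)=\Gamma_\mu(v)\big(1+\min\{0,\frac{\kappa_\Gamma-2\|v\|}{\|v\|+\kappa_0}\}\big)+\max\{0,\kappa_h-2\|v\|\}e$ for $v\in\mathbb{R}^N_+$. Triangulation $\tilde K_1(\delta)$: with $P=\mathrm{diag}(\delta,\dots,\delta,1)$, its $(N+1)$-simplices are $\langle y^1,\dots,y^{N+2}\rangle$ with $y^1=(\delta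 z,0)$, $z\in\mathbb{Z}^N$, $y^{i+1}=y^i+Pe_{\pi(i)}$ for a permutation $\pi$ of $\{1,\dots,N+1\}$; all vertices lie in $\mathbb{R}^N\times\{0,1\}$ and are componentwise increasing. Its $N$-simplices are the facets of these. Homotopy $\vartheta(v,t)=(1-t)c+t\phi(v)$; labeling $l(v,t)=\vartheta(v,t)-v$. Labeling matrix $L(\tau)$: $(N+1)\times(N+1)$ with $j$-th column $(1,l(y^j)^\top)^\top$. $W\succ0$ (lexicographically positive) means the first nonzero entry of each row of $W$ is positive. $\tau$ is complete if $L(\tau)W=I_{N+1}$ has a solution $W\succ0$. *)

theory Defs
  imports Complex_Main
begin

text \<open>Vectors in R^N are represented as functions nat => real; only the
components with index i < N are relevant (index i here = index i+1 of the paper).\<close>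

definition enorm :: "nat \<Rightarrow> (nat \<Rightarrow> real) \<Rightarrow> real" where
  "enorm N v = sqrt (\<Sum>i<N. (v i)\<^sup>2)"

definition orthant :: "nat \<Rightarrow> (nat \<Rightarrow> real) set" where
  "orthant N = {s. (\<forall>i<N. 0 \<le> s i) \<and> (\<forall>i. N \<le> i \<longrightarrow> s i = 0)}"

definition K_inf :: "(real \<Rightarrow> real) \<Rightarrow> bool" where
  "K_inf g \<longleftrightarrow> continuous_on {0..} g \<and> strict_mono_on {0..} g \<and> g 0 = 0
     \<and> (\<forall>x\<ge>0. 0 \<le> g x) \<and> (\<forall>M. \<exists>x\<ge>0. M < g x)"

definition zero_fun :: "(real \<Rightarrow> real) \<Rightarrow> bool" where
  "zero_fun g \<longleftrightarrow> (\<forall>x\<ge>0. g x = 0)"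

definition MAF :: "nat \<Rightarrow> ((nat \<Rightarrow> real) \<Rightarrow> real) \<Rightarrow> bool" where
  "MAF N m \<longleftrightarrow>
     (\<forall>s\<in>orthant N. \<forall>e>0. \<exists>d>0. \<forall>t\<in>orthant N.
         (\<forall>i<N. \<bar>t i - s i\<bar> < d) \<longrightarrow> \<bar>m t - m s\<bar> < e)
   \<and> (\<forall>s\<in>orthant N. 0 \<le> m s)
   \<and> (\<forall>s\<in>orthant N. m s = 0 \<longleftrightarrow> (\<forall>i<N. s i = 0))
   \<and> (\<forall>s\<in>orthant N. \<forall>t\<in>orthant N. (\<forall>i<N. s i < t i) \<longrightarrow> m s < m t)
   \<and> (\<forall>M. \<exists>R. \<forall>s\<in>orthant N. R < enorm N s \<longrightarrow> M < m s)"

text \<open>Irreducibility: the digraph on {0..<N} with an edge j -> i iff gamma i j is not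
the zero function is strongly connected.\<close>
definition irreducible_gains :: "nat \<Rightarrow> (nat \<Rightarrow> nat \<Rightarrow> real \<Rightarrow> real) \<Rightarrow> bool" where
  "irreducible_gains N \<gamma> \<longleftrightarrow>
     (\<forall>i<N. \<forall>j<N. (j, i) \<in> {(a, b). a < N \<and> b < N \<and> \<not> zero_fun (\<gamma> b a)}\<^sup>*)"

definition Gamma_mu :: "nat \<Rightarrow> (nat \<Rightarrow> nat \<Rightarrow> real \<Rightarrow> real) \<Rightarrow> (nat \<Rightarrow> (nat \<Rightarrow> real) \<Rightarrow> real)
     \<Rightarrow> (nat \<Rightarrow> real) \<Rightarrow> (nat \<Rightarrow> real)" where
  "Gamma_mu N \<gamma> \<mu> s = (\<lambda>i. if i < N then \<mu> i (\<lambda>j. if j < N then \<gamma> i j (s j) else 0) else 0)"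

definition phi :: "nat \<Rightarrow> (nat \<Rightarrow> nat \<Rightarrow> real \<Rightarrow> real) \<Rightarrow> (nat \<Rightarrow> (nat \<Rightarrow> real) \<Rightarrow> real)
     \<Rightarrow> real \<Rightarrow> real \<Rightarrow> real \<Rightarrow> (nat \<Rightarrow> real) \<Rightarrow> (nat \<Rightarrow> real)" where
  "phi N \<gamma> \<mu> k0 kG kh v = (\<lambda>i. if i < N then
      Gamma_mu N \<gamma> \<mu> v i * (1 + min 0 ((kG - 2 * enorm N v) / (enorm N v + k0)))
      + max 0 (kh - 2 * enorm N v) else 0)"

text \<open>Vertices of the (N+1)-simplex of the triangulation K1-tilde(delta) with base
point (delta z, 0) and permutation p of {0..N} (coordinate N is the t-coordinate):
vertex k (k = 0..N+1) equals y^1 + sum_{m<k} P e_{p m}.\<close>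
definition K1_vertex :: "nat \<Rightarrow> real \<Rightarrow> (nat \<Rightarrow> int) \<Rightarrow> (nat \<Rightarrow> nat) \<Rightarrow> nat
     \<Rightarrow> (nat \<Rightarrow> real) \<times> real" where
  "K1_vertex N \<delta> z p k =
     ((\<lambda>j. if j < N then \<delta> * of_int (z j) + (if j \<in> p ` {..<k} then \<delta> else 0) else 0),
      (if N \<in> p ` {..<k} then 1 else 0))"

text \<open>y (indexed 0..N) lists, in increasing order, the vertices of an N-simplex of
K1-tilde(delta), i.e. of a facet of one of its (N+1)-simplices.\<close>
definition is_K1_N_simplex :: "nat \<Rightarrow> real \<Rightarrow> (nat \<Rightarrow> (nat \<Rightarrow> real) \<times> real) \<Rightarrow> bool" where
  "is_K1_N_simplex N \<delta> y \<longleftrightarrow>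
     (\<exists>z p r. bij_betw p {..N} {..N} \<and> r \<le> Suc N \<and>
        (\<forall>j\<le>N. y j = K1_vertex N \<delta> z p (if j < r then j else Suc j)))"

definition label :: "nat \<Rightarrow> (nat \<Rightarrow> real) \<Rightarrow> ((nat \<Rightarrow> real) \<Rightarrow> (nat \<Rightarrow> real))
     \<Rightarrow> (nat \<Rightarrow> real) \<times> real \<Rightarrow> (nat \<Rightarrow> real)" where
  "label N c f y = (\<lambda>i. if i < N then (1 - snd y) * c i + snd y * f (fst y) i - fst y i else 0)"

definition label_matrix :: "nat \<Rightarrow> (nat \<Rightarrow> real) \<Rightarrow> ((nat \<Rightarrow> real) \<Rightarrow> (nat \<Rightarrow> real))
     \<Rightarrow> (nat \<Rightarrow> (nat \<Rightarrow> real) \<times> real) \<Rightarrow> nat \<Rightarrow> nat \<Rightarrow> real" where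
  "label_matrix N c f y r j = (if r = 0 then 1 else label N c f (y j) (r - 1))"

definition lex_pos :: "nat \<Rightarrow> (nat \<Rightarrow> nat \<Rightarrow> real) \<Rightarrow> bool" where
  "lex_pos n W \<longleftrightarrow> (\<forall>r<n. \<exists>k<n. 0 < W r k \<and> (\<forall>k'<k. W r k' = 0))"

definition complete :: "nat \<Rightarrow> (nat \<Rightarrow> real) \<Rightarrow> ((nat \<Rightarrow> real) \<Rightarrow> (nat \<Rightarrow> real))
     \<Rightarrow> (nat \<Rightarrow> (nat \<Rightarrow> real) \<times> real) \<Rightarrow> bool" where
  "complete N c f y \<longleftrightarrow> (\<exists>W. lex_pos (Suc N) W \<and>
     (\<forall>r\<le>N. \<forall>q\<le>N. (\<Sum>k\<le>N. label_matrix N c f y r k * W k q) = (if r = q then 1 else 0)))"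

end

theory Submission
  imports Defs
begin

(* Suppose the facet tau = <y^0,...,y^N>, y^k = (v^k, t_k), were complete.
   The first column w of the lexicographically positive solution W is a probability
   vector with  sum_k w_k l(y^k) = 0.  Let m be the largest index with w_m > 0.  The
   vertices increase componentwise, so every j with v^m_j = 0 also has v^k_j = 0 for all
   k in the support of w; there the labels l_j(y^k) = (1 - t_k) c_j + t_k phi_j(v^k) are
   nonnegative, hence all vanish, in particular l_j(y^m) = 0.  Taking j = i* forces
   t_m = 1 (since c >> 0), so phi_j(v^m) = 0 for every zero coordinate j of v^m; below
   the norm bound this means Gamma_mu(v^m)_j = 0 and kappa_h <= 2 |v^m|.  Finally, a
   zero coordinate of Gamma_mu(v) at a zero coordinate of v can only be fed by zero
   coordinates, so by irreducibility v^m = 0, contradicting kappa_h > 0. *)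

lemma enorm_mono:
  assumes "\<forall>i<N. 0 \<le> u i" "\<forall>i<N. u i \<le> v i"
  shows "enorm N u \<le> enorm N v"
proof -
  have "(\<Sum>i<N. (u i)\<^sup>2) \<le> (\<Sum>i<N. (v i)\<^sup>2)"
    by (rule sum_mono) (use assms in \<open>auto intro: power_mono\<close>)
  then show ?thesis unfolding enorm_def by simp
qed

lemma K1_simplex_time:
  assumes "is_K1_N_simplex N \<delta> y" "k \<le> N"
  shows "snd (y k) = 0 \<or> snd (y k) = 1"
  using assms unfolding is_K1_N_simplex_def by (auto simp: K1_vertex_def)

lemma K1_simplex_mono:
  assumes simplex: "is_K1_N_simplex N \<delta> y" and delta: "0 < \<delta>"
    and "k \<le> k'" "k' \<le> N" "i < N"
  shows "fst (y k) i \<le> fst (y k') i"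
proof -
  obtain z p r where yv: "\<forall>j\<le>N. y j = K1_vertex N \<delta> z p (if j < r then j else Suc j)"
    using simplex unfolding is_K1_N_simplex_def by blast
  define a where "a = (if k < r then k else Suc k)"
  define b where "b = (if k' < r then k' else Suc k')"
  have "p ` {..<a} \<subseteq> p ` {..<b}"
    using \<open>k \<le> k'\<close> unfolding a_def b_def by auto
  moreover have "y k = K1_vertex N \<delta> z p a" "y k' = K1_vertex N \<delta> z p b"
    using yv \<open>k \<le> k'\<close> \<open>k' \<le> N\<close> unfolding a_def b_def by auto
  ultimately show ?thesis
    using \<open>i < N\<close> delta by (auto simp: K1_vertex_def)
qed

lemma gains_arg_orthant:
  assumes gains: "\<forall>i<N. \<forall>j<N. K_inf (\<gamma> i j) \<or> zero_fun (\<gamma> i j)"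
    and "j < N" and vnn: "\<forall>i<N. 0 \<le> v i"
  shows "(\<lambda>l. if l < N then \<gamma> j l (v l) else 0) \<in> orthant N"
proof -
  have "0 \<le> \<gamma> j l (v l)" if "l < N" for l
  proof -
    have "0 \<le> v l" using vnn that by blast
    moreover have "K_inf (\<gamma> j l) \<or> zero_fun (\<gamma> j l)" using gains \<open>j < N\<close> that by blast
    ultimately show ?thesis unfolding K_inf_def zero_fun_def by auto
  qed
  then show ?thesis unfolding orthant_def by auto
qed

lemma Gamma_mu_nonneg:
  assumes gains: "\<forall>i<N. \<forall>j<N. K_inf (\<gamma> i j) \<or> zero_fun (\<gamma> i j)"
    and maf: "\<forall>i<N. MAF N (\<mu> i)" and "j < N" and "\<forall>i<N. 0 \<le> v i"
  shows "0 \<le> Gamma_mu N \<gamma> \<mu> v j"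
  using gains_arg_orthant[OF gains assms(3,4)] maf \<open>j < N\<close>
  unfolding Gamma_mu_def MAF_def by auto

text \<open>If the \<open>b\<close>-th component of \<open>Gamma_mu v\<close> vanishes while \<open>v\<^sub>a > 0\<close>, there is no
  edge \<open>a \<rightarrow> b\<close>: a \<open>K\<^sub>\<infinity>\<close> gain would make the aggregated argument nonzero.\<close>

lemma Gamma_mu_zero_no_edge:
  assumes gains: "\<forall>i<N. \<forall>j<N. K_inf (\<gamma> i j) \<or> zero_fun (\<gamma> i j)"
    and maf: "\<forall>i<N. MAF N (\<mu> i)" and vnn: "\<forall>i<N. 0 \<le> v i"
    and "a < N" "b < N" and zero: "Gamma_mu N \<gamma> \<mu> v b = 0" and pos: "0 < v a"
  shows "zero_fun (\<gamma> b a)"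
proof (rule ccontr)
  assume "\<not> zero_fun (\<gamma> b a)"
  then have K: "K_inf (\<gamma> b a)" using gains \<open>a < N\<close> \<open>b < N\<close> by blast
  let ?s = "\<lambda>l. if l < N then \<gamma> b l (v l) else 0"
  have "?s \<in> orthant N" by (rule gains_arg_orthant[OF gains \<open>b < N\<close> vnn])
  moreover have "\<mu> b ?s = 0" using zero \<open>b < N\<close> unfolding Gamma_mu_def by simp
  moreover have "MAF N (\<mu> b)" using maf \<open>b < N\<close> by blast
  ultimately have "\<gamma> b a (v a) = 0" using \<open>a < N\<close> unfolding MAF_def by auto
  moreover have "\<gamma> b a 0 < \<gamma> b a (v a)" "\<gamma> b a 0 = 0"
    using K pos unfolding K_inf_def strict_mono_on_def by (metis atLeast_iff order_refl less_imp_le)+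
  ultimately show False by simp
qed

lemma irreducible_zero_propagation:
  assumes gains: "\<forall>i<N. \<forall>j<N. K_inf (\<gamma> i j) \<or> zero_fun (\<gamma> i j)"
    and maf: "\<forall>i<N. MAF N (\<mu> i)" and irr: "irreducible_gains N \<gamma>"
    and vnn: "\<forall>i<N. 0 \<le> v i"
    and closed: "\<forall>j<N. v j = 0 \<longrightarrow> Gamma_mu N \<gamma> \<mu> v j = 0"
    and "istar < N" "v istar = 0"
  shows "\<forall>i<N. v i = 0"
proof (rule ccontr)
  assume "\<not> (\<forall>i<N. v i = 0)"
  then obtain l where "l < N" "v l \<noteq> 0" by blast
  have "(l, istar) \<in> {(a, b). a < N \<and> b < N \<and> \<not> zero_fun (\<gamma> b a)}\<^sup>*"
    using irr \<open>l < N\<close> \<open>istar < N\<close> unfolding irreducible_gains_def by blast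
  then have "v istar \<noteq> 0"
  proof (induction rule: rtrancl_induct)
    case base
    show ?case using \<open>v l \<noteq> 0\<close> .
  next
    case (step a b)
    then have "0 < v a" using vnn by force
    then show ?case
      using step Gamma_mu_zero_no_edge[OF gains maf vnn] closed by blast
  qed
  then show False using \<open>v istar = 0\<close> by simp
qed

lemma phi_factor_pos:
  fixes k0 kG n :: real
  assumes "0 < k0" "0 \<le> n" "n < k0 + kG"
  shows "0 < 1 + min 0 ((kG - 2 * n) / (n + k0))"
proof (cases "0 \<le> kG - 2 * n")
  case True
  then show ?thesis using assms by simp
next
  case False
  have "1 + (kG - 2 * n) / (n + k0) = (kG + k0 - n) / (n + k0)"
    using assms by (simp add: field_simps)
  also have "\<dots> > 0" using assms by simp
  finally show ?thesis by linarith
qed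

lemma phi_nonneg_and_zero:
  assumes gains: "\<forall>i<N. \<forall>j<N. K_inf (\<gamma> i j) \<or> zero_fun (\<gamma> i j)"
    and maf: "\<forall>i<N. MAF N (\<mu> i)" and k0: "0 < k0"
    and "j < N" and vnn: "\<forall>i<N. 0 \<le> v i" and nv: "enorm N v < k0 + kG"
  shows "0 \<le> phi N \<gamma> \<mu> k0 kG kh v j"
    and "phi N \<gamma> \<mu> k0 kG kh v j = 0 \<Longrightarrow> Gamma_mu N \<gamma> \<mu> v j = 0 \<and> kh \<le> 2 * enorm N v"
proof -
  define F where "F = 1 + min 0 ((kG - 2 * enorm N v) / (enorm N v + k0))"
  have "0 \<le> enorm N v" unfolding enorm_def by (simp add: sum_nonneg)
  then have F: "0 < F" unfolding F_def using phi_factor_pos[OF k0 _ nv] by blast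
  have GF: "0 \<le> Gamma_mu N \<gamma> \<mu> v j * F"
    using Gamma_mu_nonneg[OF gains maf \<open>j < N\<close> vnn] F by simp
  have ph: "phi N \<gamma> \<mu> k0 kG kh v j = Gamma_mu N \<gamma> \<mu> v j * F + max 0 (kh - 2 * enorm N v)"
    unfolding phi_def F_def using \<open>j < N\<close> by simp
  show "0 \<le> phi N \<gamma> \<mu> k0 kG kh v j" using ph GF by linarith
  assume "phi N \<gamma> \<mu> k0 kG kh v j = 0"
  then have "Gamma_mu N \<gamma> \<mu> v j * F = 0" "max 0 (kh - 2 * enorm N v) = 0"
    using ph GF by linarith+
  then show "Gamma_mu N \<gamma> \<mu> v j = 0 \<and> kh \<le> 2 * enorm N v" using F by auto
qed

text \<open>Completeness yields, as the first column of \<open>W\<close>, a probability vector \<open>w\<close> on the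
  vertices balancing the labels: \<open>\<Sum>\<^sub>k w\<^sub>k l(y\<^sup>k) = 0\<close>.  Nonnegativity of \<open>w\<close> comes from
  the lexicographic positivity of the rows of \<open>W\<close>.\<close>

lemma complete_balancing_weights:
  assumes "complete N c f y"
  obtains w where "\<forall>k\<le>N. 0 \<le> w k" "(\<Sum>k\<le>N. w k) = 1"
    "\<forall>j<N. (\<Sum>k\<le>N. label N c f (y k) j * w k) = 0"
proof -
  obtain W where lp: "lex_pos (Suc N) W" and
    eq: "\<forall>r\<le>N. \<forall>q\<le>N. (\<Sum>k\<le>N. label_matrix N c f y r k * W k q) = (if r = q then 1 else 0)"
    using assms unfolding complete_def by blast
  have "0 \<le> W k 0" if "k \<le> N" for k
  proof -
    obtain q where "0 < W k q" "\<forall>q'<q. W k q' = 0"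
      using lp \<open>k \<le> N\<close> unfolding lex_pos_def by (meson less_Suc_eq_le)
    then show ?thesis by (cases q) auto
  qed
  moreover have "(\<Sum>k\<le>N. W k 0) = 1"
    using eq[rule_format, of 0 0] by (simp add: label_matrix_def)
  moreover have "(\<Sum>k\<le>N. label N c f (y k) j * W k 0) = 0" if "j < N" for j
    using eq[rule_format, of "Suc j" 0] that by (simp add: label_matrix_def)
  ultimately show ?thesis using that[of "\<lambda>k. W k 0"] by blast
qed

lemma last_support_vertex:
  fixes x L :: "nat \<Rightarrow> nat \<Rightarrow> real" and w :: "nat \<Rightarrow> real"
  assumes mono: "\<And>k k' j. k \<le> k' \<Longrightarrow> k' \<le> N \<Longrightarrow> j < n \<Longrightarrow> x k j \<le> x k' j"
    and xnn: "\<And>k j. k \<le> N \<Longrightarrow> j < n \<Longrightarrow> 0 \<le> x k j"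
    and Lnn: "\<And>k j. k \<le> N \<Longrightarrow> j < n \<Longrightarrow> x k j = 0 \<Longrightarrow> 0 \<le> L k j"
    and wnn: "\<forall>k\<le>N. 0 \<le> w k" and wsum: "(\<Sum>k\<le>N. w k) = 1"
    and balance: "\<forall>j<n. (\<Sum>k\<le>N. L k j * w k) = 0"
  obtains m where "m \<le> N" "\<And>j. j < n \<Longrightarrow> x m j = 0 \<Longrightarrow> L m j = 0"
proof
  define T where "T = {k. k \<le> N \<and> 0 < w k}"
  have "T \<noteq> {}"
  proof
    assume "T = {}"
    then have "\<forall>k\<le>N. w k = 0" using wnn unfolding T_def by force
    then show False using wsum by simp
  qed
  moreover have "finite T" unfolding T_def by simp
  ultimately have mT: "Max T \<in> T" and mmax: "\<And>k. k \<in> T \<Longrightarrow> k \<le> Max T" by auto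
  then show "Max T \<le> N" unfolding T_def by auto
  fix j assume "j < n" "x (Max T) j = 0"
  have "0 \<le> L k j * w k" if "k \<le> N" for k
  proof (cases "w k = 0")
    case False
    then have "k \<in> T" using wnn that unfolding T_def by force
    then have "x k j \<le> 0"
      using mono[OF mmax] \<open>x (Max T) j = 0\<close> mT \<open>j < n\<close> unfolding T_def by fastforce
    then have "x k j = 0" using xnn[OF that \<open>j < n\<close>] by simp
    then show ?thesis using Lnn[OF that \<open>j < n\<close>] wnn that by simp
  qed simp
  then have "\<forall>k\<in>{..N}. L k j * w k = 0"
    using sum_nonneg_eq_0_iff[of "{..N}" "\<lambda>k. L k j * w k"] balance \<open>j < n\<close> by simp
  then show "L (Max T) j = 0" using mT unfolding T_def by auto
qed

text \<open>A label vanishing on a zero coordinate of the vertex: at time 0 the label is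
  \<open>c\<^sub>j > 0\<close>, so the vertex lies at time 1 and \<open>f\<close> vanishes there.\<close>

lemma label_zero_on_face:
  assumes "label N c f y j = 0" "j < N" "fst y j = 0" "0 < c j"
    and "snd y = 0 \<or> snd y = 1"
  shows "snd y = 1 \<and> f (fst y) j = 0"
  using assms unfolding label_def by auto

theorem mainTheorem4:
  fixes N :: nat and \<gamma> :: "nat \<Rightarrow> nat \<Rightarrow> real \<Rightarrow> real"
    and \<mu> :: "nat \<Rightarrow> (nat \<Rightarrow> real) \<Rightarrow> real"
    and k0 kG kh \<delta> :: real and c :: "nat \<Rightarrow> real"
    and y :: "nat \<Rightarrow> (nat \<Rightarrow> real) \<times> real" and istar :: nat
  assumes gains: "\<forall>i<N. \<forall>j<N. K_inf (\<gamma> i j) \<or> zero_fun (\<gamma> i j)"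
    and irr: "irreducible_gains N \<gamma>"
    and maf: "\<forall>i<N. MAF N (\<mu> i)"
    and k0: "0 < k0" and kh: "0 < kh" and khG: "kh < kG" and delta: "0 < \<delta>"
    and c_pos: "\<forall>i<N. 0 < c i"
    and c_norm: "enorm N c < kG / 2"
    and simplex: "is_K1_N_simplex N \<delta> y"
    and nonneg: "\<forall>j\<le>N. \<forall>i<N. 0 \<le> fst (y j) i"
    and istar: "istar < N" and bdry: "\<forall>j\<le>N. fst (y j) istar = 0"
    and small: "enorm N (fst (y N)) < k0 + kG"
  shows "\<not> complete N c (phi N \<gamma> \<mu> k0 kG kh) y"
proof
  let ?f = "phi N \<gamma> \<mu> k0 kG kh" and ?v = "\<lambda>k. fst (y k)"
  note mono = K1_simplex_mono[OF simplex delta]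
  have norm: "enorm N (?v k) < k0 + kG" if "k \<le> N" for k
    using enorm_mono[of N "?v k" "?v N"] nonneg mono that small by fastforce
  note phi_facts = phi_nonneg_and_zero[OF gains maf k0 _ _ norm]
  assume "complete N c ?f y"
  then obtain w where w: "\<forall>k\<le>N. 0 \<le> w k" "(\<Sum>k\<le>N. w k) = 1"
    "\<forall>j<N. (\<Sum>k\<le>N. label N c ?f (y k) j * w k) = 0"
    by (rule complete_balancing_weights)
  have "0 \<le> label N c ?f (y k) j" if "k \<le> N" "j < N" "?v k j = 0" for k j
    using K1_simplex_time[OF simplex] phi_facts(1) c_pos nonneg that
    unfolding label_def by fastforce
  then obtain m where "m \<le> N" and face: "\<And>j. j < N \<Longrightarrow> ?v m j = 0 \<Longrightarrow> label N c ?f (y m) j = 0"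
    using last_support_vertex[of N N ?v "\<lambda>k j. label N c ?f (y k) j" w] mono nonneg w by blast
  have phi_zero: "?f (?v m) j = 0" if "j < N" "?v m j = 0" for j
    using label_zero_on_face[OF face] c_pos K1_simplex_time[OF simplex \<open>m \<le> N\<close>] that by blast
  have vnn: "\<forall>i<N. 0 \<le> ?v m i" using nonneg \<open>m \<le> N\<close> by blast
  have "\<forall>j<N. ?v m j = 0 \<longrightarrow> Gamma_mu N \<gamma> \<mu> (?v m) j = 0"
    using phi_facts(2)[OF _ vnn \<open>m \<le> N\<close> phi_zero] by blast
  then have "\<forall>i<N. ?v m i = 0"
    using irreducible_zero_propagation[OF gains maf irr vnn _ istar] bdry \<open>m \<le> N\<close> by blast
  then have "enorm N (?v m) = 0" unfolding enorm_def by simp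
  moreover have "kh \<le> 2 * enorm N (?v m)"
    using phi_facts(2)[OF istar vnn \<open>m \<le> N\<close> phi_zero[OF istar]] bdry \<open>m \<le> N\<close> by blast
  ultimately show False using kh by simp
qed

end
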